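(* Let $\mathfrak{K}=(\{a,b\},R,E)$ be the $\mathsf{MS4}$-frame with $R[a]=\{a,b\}$, $R[b]=\{b\}$, $E[a]=E[b]=\{a,b\}$, and let $\mathfrak{H}=(\{a,b,c\},R,E)$ be the $\mathsf{MS4}$-frame with $R[a]=\{a,b,c\}$, $R[b]=R[c]=\{b,c\}$, $E[a]=E[b]=\{a,b\}$, $E[c]=\{c\}$. Then: (1) $\mathfrak{K}\vDash\mathsf{MGrz}$ but $\mathfrak{K}\nvDash\mathsf{LKur}$; (2) $\mathfrak{H}\vDash\mathsf{LKur}$ but $\mathfrak{H}\nvDash\mathsf{MGrz}$; (3) $\mathsf{MGrz}$ and $\mathsf{LKur}$ are incomparable (neither contains the other).
   Context: $\mathsf{MS4}$ is the smallest set of formulas in the classical bimodal language $\mathcal{L}_{\Box\forall}$ containing all classical tautologies, the $\mathsf{S4}$ axioms for $\Box$, the $\mathsf{S5}$ axioms for $\forall$, and $\Box\forall p\to\forall\Box p$, closed under modus ponens, substitution, $\Box$- and $\forall$-necessitation; $\Diamond=\neg\Box\neg$, $\exists=\neg\forall\neg$. $\mathsf{MGrz}=\mathsf{MS4}+\Box(\Box(p\to\Box p)\to p)\to p$ and $\mathsf{LKur}=\mathsf{MS4}+\Box\forall\Diamond\Box p\to\Diamond\forall p$ (smallest extensions closed under the same rules containing the extra axiom). An $\mathsf{MS4}$-frame is $(Y,R,E)$ with $R$ a quasi-order, $E$ an equivalence relation, such that $xEy$ and $yRz$ imply there is $u$ with $xRu$ and $uEz$. Formulas are evaluated with valuations assigning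 subsets of $Y$ to letters, $\Box$ interpreted via $R$ and $\forall$ via $E$; a frame validates a logic if every formula of the logic is true at every point under every valuation. $R[x]=\{y: xRy\}$. *)

theory Defs
  imports Main
begin

datatype fm = Var nat | Bot | Imp fm fm | Box fm | All fm

definition Neg :: "fm \<Rightarrow> fm" where "Neg p = Imp p Bot"
definition Dia :: "fm \<Rightarrow> fm" where "Dia p = Neg (Box (Neg p))"
definition Ex :: "fm \<Rightarrow> fm" where "Ex p = Neg (All (Neg p))"

text \<open>Classical tautologies: formulas true under every Boolean assignment
  to propositional letters and to modalized subformulas (i.e. substitution
  instances of propositional tautologies).\<close>
fun tval :: "(fm \<Rightarrow> bool) \<Rightarrow> fm \<Rightarrow> bool" where
  "tval v (Var n) = v (Var n)"
| "tval v Bot = False"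
| "tval v (Imp p q) = (tval v p \<longrightarrow> tval v q)"
| "tval v (Box p) = v (Box p)"
| "tval v (All p) = v (All p)"

definition tautology :: "fm \<Rightarrow> bool" where
  "tautology p = (\<forall>v. tval v p)"

fun subst :: "(nat \<Rightarrow> fm) \<Rightarrow> fm \<Rightarrow> fm" where
  "subst s (Var n) = s n"
| "subst s Bot = Bot"
| "subst s (Imp p q) = Imp (subst s p) (subst s q)"
| "subst s (Box p) = Box (subst s p)"
| "subst s (All p) = All (subst s p)"

abbreviation "P \<equiv> Var 0"
abbreviation "Q \<equiv> Var 1"

definition ms4_axioms :: "fm set" where
  "ms4_axioms = {
     Imp (Box (Imp P Q)) (Imp (Box P) (Box Q)),
     Imp (Box P) P,
     Imp (Box P) (Box (Box P)),
     Imp (All (Imp P Q)) (Imp (All P) (All Q)),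
     Imp (All P) P,
     Imp (Ex P) (All (Ex P)),
     Imp (Box (All P)) (All (Box P)) }"

inductive_set ms4_ext :: "fm set \<Rightarrow> fm set" for A where
  taut: "tautology p \<Longrightarrow> p \<in> ms4_ext A"
| ax: "p \<in> ms4_axioms \<Longrightarrow> p \<in> ms4_ext A"
| extra: "p \<in> A \<Longrightarrow> p \<in> ms4_ext A"
| mp: "p \<in> ms4_ext A \<Longrightarrow> Imp p q \<in> ms4_ext A \<Longrightarrow> q \<in> ms4_ext A"
| sub: "p \<in> ms4_ext A \<Longrightarrow> subst s p \<in> ms4_ext A"
| necBox: "p \<in> ms4_ext A \<Longrightarrow> Box p \<in> ms4_ext A"
| necAll: "p \<in> ms4_ext A \<Longrightarrow> All p \<in> ms4_ext A"

definition MS4 :: "fm set" where "MS4 = ms4_ext {}"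

definition grz_axiom :: fm where
  "grz_axiom = Imp (Box (Imp (Box (Imp P (Box P))) P)) P"

definition kur_axiom :: fm where
  "kur_axiom = Imp (Box (All (Dia (Box P)))) (Dia (All P))"

definition MGrz :: "fm set" where "MGrz = ms4_ext {grz_axiom}"
definition LKur :: "fm set" where "LKur = ms4_ext {kur_axiom}"

definition ms4_frame :: "'w set \<Rightarrow> ('w \<Rightarrow> 'w \<Rightarrow> bool) \<Rightarrow> ('w \<Rightarrow> 'w \<Rightarrow> bool) \<Rightarrow> bool" where
  "ms4_frame Y R E \<longleftrightarrow>
     (\<forall>x\<in>Y. R x x) \<and> (\<forall>x\<in>Y. \<forall>y\<in>Y. \<forall>z\<in>Y. R x y \<longrightarrow> R y z \<longrightarrow> R x z) \<and>
     (\<forall>x\<in>Y. E x x) \<and> (\<forall>x\<in>Y. \<forall>y\<in>Y. E x y \<longrightarrow> E y x) \<and>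
     (\<forall>x\<in>Y. \<forall>y\<in>Y. \<forall>z\<in>Y. E x y \<longrightarrow> E y z \<longrightarrow> E x z) \<and>
     (\<forall>x y. R x y \<longrightarrow> x \<in> Y \<and> y \<in> Y) \<and> (\<forall>x y. E x y \<longrightarrow> x \<in> Y \<and> y \<in> Y) \<and>
     (\<forall>x\<in>Y. \<forall>y\<in>Y. \<forall>z\<in>Y. E x y \<longrightarrow> R y z \<longrightarrow> (\<exists>u\<in>Y. R x u \<and> E u z))"

fun sat :: "'w set \<Rightarrow> ('w \<Rightarrow> 'w \<Rightarrow> bool) \<Rightarrow> ('w \<Rightarrow> 'w \<Rightarrow> bool) \<Rightarrow> (nat \<Rightarrow> 'w set) \<Rightarrow> 'w \<Rightarrow> fm \<Rightarrow> bool" where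
  "sat Y R E V x (Var n) = (x \<in> V n)"
| "sat Y R E V x Bot = False"
| "sat Y R E V x (Imp p q) = (sat Y R E V x p \<longrightarrow> sat Y R E V x q)"
| "sat Y R E V x (Box p) = (\<forall>y\<in>Y. R x y \<longrightarrow> sat Y R E V y p)"
| "sat Y R E V x (All p) = (\<forall>y\<in>Y. E x y \<longrightarrow> sat Y R E V y p)"

definition valid_in :: "'w set \<Rightarrow> ('w \<Rightarrow> 'w \<Rightarrow> bool) \<Rightarrow> ('w \<Rightarrow> 'w \<Rightarrow> bool) \<Rightarrow> fm \<Rightarrow> bool" where
  "valid_in Y R E p = (\<forall>V. \<forall>x\<in>Y. sat Y R E (\<lambda>n. V n \<inter> Y) x p)"

definition validates :: "'w set \<Rightarrow> ('w \<Rightarrow> 'w \<Rightarrow> bool) \<Rightarrow> ('w \<Rightarrow> 'w \<Rightarrow> bool) \<Rightarrow> fm set \<Rightarrow> bool" where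
  "validates Y R E L = (\<forall>p\<in>L. valid_in Y R E p)"

datatype pt = a | b | c

definition K_Y :: "pt set" where "K_Y = {a, b}"
definition K_R :: "pt \<Rightarrow> pt \<Rightarrow> bool" where
  "K_R x y = ((x = a \<and> y \<in> {a, b}) \<or> (x = b \<and> y = b))"
definition K_E :: "pt \<Rightarrow> pt \<Rightarrow> bool" where
  "K_E x y = (x \<in> {a, b} \<and> y \<in> {a, b})"

definition H_Y :: "pt set" where "H_Y = {a, b, c}"
definition H_R :: "pt \<Rightarrow> pt \<Rightarrow> bool" where
  "H_R x y = ((x = a \<and> y \<in> {a, b, c}) \<or> (x \<in> {b, c} \<and> y \<in> {b, c}))"
definition H_E :: "pt \<Rightarrow> pt \<Rightarrow> bool" where
  "H_E x y = ((x \<in> {a, b} \<and> y \<in> {a, b}) \<or> (x = c \<and> y = c))"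

end

theory Submission
  imports Defs
begin

text \<open>Every MS4 axiom is valid on every MS4-frame and validity is preserved by the rules,
  so a frame validates \<open>ms4_ext A\<close> iff it validates the extra axioms \<open>A\<close>. On \<open>K\<close>, a finite
  partial order, the Grzegorczyk axiom holds, while with \<open>P = {b}\<close> the formula \<open>\<diamond>\<box>P\<close> holds
  everywhere but \<open>\<forall>P\<close> nowhere, refuting the Kuratowski axiom. On \<open>H\<close>, the point \<open>c\<close> is seen
  from everywhere and its \<open>E\<close>-class is \<open>{c}\<close>; since \<open>R[b] = R[c] = {b, c}\<close>, the antecedent
  \<open>\<box>\<forall>\<diamond>\<box>P\<close> forces \<open>P\<close> at \<open>c\<close>, hence \<open>\<diamond>\<forall>P\<close>. The proper cluster \<open>{b, c}\<close> refutes the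
  Grzegorczyk axiom at \<open>b\<close> with \<open>P = {c}\<close>.\<close>

lemma valid_inD: "valid_in Y R E p \<Longrightarrow> x \<in> Y \<Longrightarrow> sat Y R E (\<lambda>n. V n \<inter> Y) x p"
  unfolding valid_in_def by blast

lemma tval_sat_eq: "tval (sat Y R E V x) p = sat Y R E V x p"
  by (induction p) auto

lemma sat_subst:
  "x \<in> Y \<Longrightarrow> sat Y R E V x (subst s p) = sat Y R E (\<lambda>n. {y\<in>Y. sat Y R E V y (s n)}) x p"
  by (induction p arbitrary: x) auto

lemma valid_in_subst:
  assumes "valid_in Y R E p"
  shows "valid_in Y R E (subst s p)"
  unfolding valid_in_def
proof (intro allI ballI)
  fix V x
  assume "x \<in> Y"
  define W where "W n = {y\<in>Y. sat Y R E (\<lambda>n. V n \<inter> Y) y (s n)}" for n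
  have "(\<lambda>n. W n \<inter> Y) = W"
    unfolding W_def by auto
  then have "sat Y R E W x p"
    using valid_inD[OF assms \<open>x \<in> Y\<close>, of W] by simp
  then show "sat Y R E (\<lambda>n. V n \<inter> Y) x (subst s p)"
    using sat_subst[OF \<open>x \<in> Y\<close>] unfolding W_def by simp
qed

lemma ms4_frame_valid_in_axioms:
  assumes "ms4_frame Y R E" and "p \<in> ms4_axioms"
  shows "valid_in Y R E p"
proof -
  obtain R_refl: "\<forall>x\<in>Y. R x x"
    and R_trans: "\<forall>x\<in>Y. \<forall>y\<in>Y. \<forall>z\<in>Y. R x y \<longrightarrow> R y z \<longrightarrow> R x z"
    and E_refl: "\<forall>x\<in>Y. E x x"
    and E_sym: "\<forall>x\<in>Y. \<forall>y\<in>Y. E x y \<longrightarrow> E y x"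
    and E_trans: "\<forall>x\<in>Y. \<forall>y\<in>Y. \<forall>z\<in>Y. E x y \<longrightarrow> E y z \<longrightarrow> E x z"
    and commute: "\<forall>x\<in>Y. \<forall>y\<in>Y. \<forall>z\<in>Y. E x y \<longrightarrow> R y z \<longrightarrow> (\<exists>u\<in>Y. R x u \<and> E u z)"
    using assms(1) unfolding ms4_frame_def by (elim conjE) (rule that; assumption)
  have "sat Y R E V x p" if "x \<in> Y" for V x
    using assms(2) unfolding ms4_axioms_def
  proof (elim insertE emptyE)
    assume p: "p = Imp (Box P) P"
    show ?thesis unfolding p using R_refl \<open>x \<in> Y\<close> by simp
  next
    assume p: "p = Imp (Box P) (Box (Box P))"
    show ?thesis unfolding p using R_trans \<open>x \<in> Y\<close> by (simp (no_asm_use)) meson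
  next
    assume p: "p = Imp (All P) P"
    show ?thesis unfolding p using E_refl \<open>x \<in> Y\<close> by simp
  next
    assume p: "p = Imp (Ex P) (All (Ex P))"
    show ?thesis unfolding p using E_sym E_trans \<open>x \<in> Y\<close>
      by (simp (no_asm_use) add: Ex_def Neg_def) meson
  next
    assume p: "p = Imp (Box (All P)) (All (Box P))"
    show ?thesis unfolding p using commute \<open>x \<in> Y\<close> by (simp (no_asm_use)) meson
  qed simp_all
  then show ?thesis
    unfolding valid_in_def by blast
qed

lemma ms4_frame_validates_ms4_ext_iff:
  assumes "ms4_frame Y R E"
  shows "validates Y R E (ms4_ext A) \<longleftrightarrow> (\<forall>p\<in>A. valid_in Y R E p)"
proof
  assume "validates Y R E (ms4_ext A)"
  then show "\<forall>p\<in>A. valid_in Y R E p"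
    unfolding validates_def using ms4_ext.extra by blast
next
  assume extra_valid: "\<forall>p\<in>A. valid_in Y R E p"
  have "valid_in Y R E q" if "q \<in> ms4_ext A" for q
    using that
  proof (induction q rule: ms4_ext.induct)
    case (taut p)
    then show ?case
      unfolding valid_in_def tautology_def by (metis tval_sat_eq)
  next
    case (ax p)
    then show ?case
      using ms4_frame_valid_in_axioms[OF assms] by blast
  next
    case (extra p)
    then show ?case
      using extra_valid by blast
  next
    case (sub p s)
    from sub.IH show ?case
      by (rule valid_in_subst)
  qed (auto simp: valid_in_def)
  then show "validates Y R E (ms4_ext A)"
    unfolding validates_def by blast
qed

lemma ms4_frame_K: "ms4_frame K_Y K_R K_E"
  unfolding ms4_frame_def K_Y_def K_R_def K_E_def by auto

lemma ms4_frame_H: "ms4_frame H_Y H_R H_E"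
  unfolding ms4_frame_def H_Y_def H_R_def H_E_def by auto

lemma valid_in_K_grz: "valid_in K_Y K_R K_E grz_axiom"
  unfolding valid_in_def grz_axiom_def K_Y_def K_R_def by simp blast

lemma valid_in_H_kur: "valid_in H_Y H_R H_E kur_axiom"
  unfolding valid_in_def kur_axiom_def H_Y_def H_R_def H_E_def Dia_def Neg_def by simp

lemma not_valid_in_K_kur: "\<not> valid_in K_Y K_R K_E kur_axiom"
proof
  assume "valid_in K_Y K_R K_E kur_axiom"
  then have "sat K_Y K_R K_E (\<lambda>_. {b} \<inter> K_Y) a kur_axiom"
    by (rule valid_inD) (simp add: K_Y_def)
  then show False
    unfolding kur_axiom_def K_Y_def K_R_def K_E_def Dia_def Neg_def by auto
qed

lemma not_valid_in_H_grz: "\<not> valid_in H_Y H_R H_E grz_axiom"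
proof
  assume "valid_in H_Y H_R H_E grz_axiom"
  then have "sat H_Y H_R H_E (\<lambda>_. {c} \<inter> H_Y) b grz_axiom"
    by (rule valid_inD) (simp add: H_Y_def)
  then show False
    unfolding grz_axiom_def H_Y_def H_R_def H_E_def by auto
qed

theorem theorem5p4:
  shows "ms4_frame K_Y K_R K_E \<and> ms4_frame H_Y H_R H_E \<and>
         (validates K_Y K_R K_E MGrz \<and> \<not> validates K_Y K_R K_E LKur) \<and>
         (validates H_Y H_R H_E LKur \<and> \<not> validates H_Y H_R H_E MGrz) \<and>
         (\<not> MGrz \<subseteq> LKur \<and> \<not> LKur \<subseteq> MGrz)"
proof -
  have K_MGrz: "validates K_Y K_R K_E MGrz" and K_LKur: "\<not> validates K_Y K_R K_E LKur"
    using ms4_frame_validates_ms4_ext_iff[OF ms4_frame_K] valid_in_K_grz not_valid_in_K_kur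
    unfolding MGrz_def LKur_def by auto
  moreover have H_LKur: "validates H_Y H_R H_E LKur" and H_MGrz: "\<not> validates H_Y H_R H_E MGrz"
    using ms4_frame_validates_ms4_ext_iff[OF ms4_frame_H] valid_in_H_kur not_valid_in_H_grz
    unfolding MGrz_def LKur_def by auto
  moreover have "\<not> MGrz \<subseteq> LKur"
    using H_LKur H_MGrz unfolding validates_def by blast
  moreover have "\<not> LKur \<subseteq> MGrz"
    using K_MGrz K_LKur unfolding validates_def by blast
  ultimately show ?thesis
    using ms4_frame_K ms4_frame_H by blast
qed

end
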